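(* The scalar curvature $r=\langle G,{\rm Ric}\rangle_{\mathcal{B}}$ is constant, given by \[ r=\frac{[2]_q}{q^2+q^{-2}}(q^{-6}+q^6)=[2]_q(1+(q^{-2}-q^2)^2), \] and as $q\to 1$ the scalar curvature converges to 2.
   Context: $\mathcal{B}=\mathcal{O}(S^2_q)$, $q\in(0,1]$, $[x]_q=\frac{q^{-x}-q^x}{q^{-1}-q}$. With the exact frame $\omega_j=(-1)^{1-j}\begin{pmatrix}0&q^{1/2}(t^1_{2-j,-1})^*\\ q^{-1/2}(t^1_{2-j,1})^*&0\end{pmatrix}$ ($j=1,2,3$) of the one-forms of the Dabrowski--Sitarz spectral triple, right inner product $\langle\rho,\eta\rangle_{\mathcal{B}}=\mathrm{Tr}(\mathrm{diag}(q,q^{-1})\rho^*\eta)$ and line element $G=\sum_j\omega_j\otimes\omega_j^\dagger$, the Ricci curvature of the Levi-Civita connection is ${\rm Ric}=\frac{[2]_q}{q^2+q^{-2}}\,\omega_i\otimes\mathrm{diag}(q^{-4},q^4)\,\omega_i^\dagger$. *)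

theory Defs
  imports Complex_Main
begin

definition qnum :: "real \<Rightarrow> real \<Rightarrow> real" where
  "qnum x q = (if q = 1 then x else (q powr (-x) - q powr x) / (inverse q - q))"

definition is_star :: "('a::real_algebra_1 \<Rightarrow> 'a) \<Rightarrow> bool" where
  "is_star st \<longleftrightarrow> (\<forall>x y. st (x + y) = st x + st y) \<and> (\<forall>x y. st (x * y) = st y * st x)
     \<and> (\<forall>x. st (st x) = x) \<and> (\<forall>r x. st (r *\<^sub>R x) = r *\<^sub>R st x)"

text \<open>Defining relations of O(SU_q(2)) (Dabrowski--Sitarz / DLSSV conventions):
  ba = q ab, b*a = q ab*, bb* = b*b, aa* + bb* = 1, a*a + q^2 b*b = 1.\<close>
definition suq2_rel :: "('a::real_algebra_1 \<Rightarrow> 'a) \<Rightarrow> real \<Rightarrow> 'a \<Rightarrow> 'a \<Rightarrow> bool" where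
  "suq2_rel st q a b \<longleftrightarrow>
     b * a = q *\<^sub>R (a * b) \<and> st b * a = q *\<^sub>R (a * st b) \<and> b * st b = st b * b \<and>
     a * st a + b * st b = 1 \<and> st a * a + (q^2) *\<^sub>R (st b * b) = 1"

text \<open>Spin-1 corepresentation matrix t^1_{i,j}, i,j in {-1,0,1}, obtained from
  t^{1/2} = [[a, b], [-q b*, a*]] on the q-symmetric square.\<close>
definition t1 :: "('a::real_algebra_1 \<Rightarrow> 'a) \<Rightarrow> real \<Rightarrow> 'a \<Rightarrow> 'a \<Rightarrow> int \<Rightarrow> int \<Rightarrow> 'a" where
  "t1 st q a b i j =
    (let s = sqrt (1 + q^2) in
     if i = 1 \<and> j = 1 then a * a
     else if i = 0 \<and> j = 1 then (- q * s) *\<^sub>R (a * st b)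
     else if i = -1 \<and> j = 1 then (q^2) *\<^sub>R (st b * st b)
     else if i = 1 \<and> j = 0 then s *\<^sub>R (a * b)
     else if i = 0 \<and> j = 0 then a * st a - (q^2) *\<^sub>R (b * st b)
     else if i = -1 \<and> j = 0 then (- s) *\<^sub>R (st a * st b)
     else if i = 1 \<and> j = -1 then b * b
     else if i = 0 \<and> j = -1 then s *\<^sub>R (b * st a)
     else if i = -1 \<and> j = -1 then st a * st a
     else 0)"

text \<open>2x2 matrices over the algebra, indices 0,1.\<close>
type_synonym 'a mat2 = "nat \<Rightarrow> nat \<Rightarrow> 'a"

definition mmul :: "'a::real_algebra_1 mat2 \<Rightarrow> 'a mat2 \<Rightarrow> 'a mat2" where
  "mmul M N = (\<lambda>i j. \<Sum>k<2. M i k * N k j)"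

definition madj :: "('a::real_algebra_1 \<Rightarrow> 'a) \<Rightarrow> 'a mat2 \<Rightarrow> 'a mat2" where
  "madj st M = (\<lambda>i j. st (M j i))"

definition mtr :: "'a::real_algebra_1 mat2 \<Rightarrow> 'a" where
  "mtr M = M 0 0 + M 1 1"

definition mdiag :: "real \<Rightarrow> real \<Rightarrow> 'a::real_algebra_1 mat2" where
  "mdiag x y = (\<lambda>i j. if i = 0 \<and> j = 0 then of_real x else if i = 1 \<and> j = 1 then of_real y else 0)"

definition lmult :: "'a::real_algebra_1 \<Rightarrow> 'a mat2 \<Rightarrow> 'a mat2" where
  "lmult x M = (\<lambda>i j. x * M i j)"

definition ip :: "('a::real_algebra_1 \<Rightarrow> 'a) \<Rightarrow> real \<Rightarrow> 'a mat2 \<Rightarrow> 'a mat2 \<Rightarrow> 'a" where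
  "ip st q \<rho> \<eta> = mtr (mmul (mdiag q (inverse q)) (mmul (madj st \<rho>) \<eta>))"

text \<open>Elements of the balanced tensor product of one-forms, given as finite sums
  of elementary tensors (lists of pairs), with the interior tensor product inner product
  <rho1 (x) sigma1, rho2 (x) sigma2> = <sigma1, <rho1, rho2> sigma2>.\<close>
definition ip2 :: "('a::real_algebra_1 \<Rightarrow> 'a) \<Rightarrow> real \<Rightarrow> ('a mat2 \<times> 'a mat2) list \<Rightarrow> ('a mat2 \<times> 'a mat2) list \<Rightarrow> 'a" where
  "ip2 st q T S = (\<Sum>(\<rho>, \<sigma>)\<leftarrow>T. \<Sum>(\<eta>, \<tau>)\<leftarrow>S. ip st q \<sigma> (lmult (ip st q \<rho> \<eta>) \<tau>))"

text \<open>The exact frame omega_j, j = 1,2,3: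
  omega_j = (-1)^(1-j) [[0, q^(1/2) (t^1_{2-j,-1})^*], [q^(-1/2) (t^1_{2-j,1})^*, 0]].
  Note (-1)^(1-j) = (-1)^(j+1).\<close>
definition omega :: "('a::real_algebra_1 \<Rightarrow> 'a) \<Rightarrow> real \<Rightarrow> 'a \<Rightarrow> 'a \<Rightarrow> nat \<Rightarrow> 'a mat2" where
  "omega st q a b j = (\<lambda>r c. (-1)^(j+1) *\<^sub>R
      (if r = 0 \<and> c = 1 then sqrt q *\<^sub>R st (t1 st q a b (2 - int j) (-1))
       else if r = 1 \<and> c = 0 then inverse (sqrt q) *\<^sub>R st (t1 st q a b (2 - int j) 1)
       else 0))"

definition line_elt :: "('a::real_algebra_1 \<Rightarrow> 'a) \<Rightarrow> real \<Rightarrow> 'a \<Rightarrow> 'a \<Rightarrow> ('a mat2 \<times> 'a mat2) list" where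
  "line_elt st q a b = map (\<lambda>j. (omega st q a b j, madj st (omega st q a b j))) [1, 2, 3]"

definition ricci :: "('a::real_algebra_1 \<Rightarrow> 'a) \<Rightarrow> real \<Rightarrow> 'a \<Rightarrow> 'a \<Rightarrow> ('a mat2 \<times> 'a mat2) list" where
  "ricci st q a b = map (\<lambda>i. (omega st q a b i,
      lmult (of_real (qnum 2 q / (q^2 + inverse q ^ 2)))
        (mmul (mdiag (inverse q ^ 4) (q ^ 4)) (madj st (omega st q a b i))))) [1, 2, 3]"

definition scalar_curv :: "('a::real_algebra_1 \<Rightarrow> 'a) \<Rightarrow> real \<Rightarrow> 'a \<Rightarrow> 'a \<Rightarrow> 'a" where
  "scalar_curv st q a b = ip2 st q (line_elt st q a b) (ricci st q a b)"

end

theory Submission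
  imports Defs
begin

text \<open>The frame \<open>\<omega>\<^sub>j\<close> is off-diagonal with entries \<open>x\<^sub>j\<close>, \<open>y\<^sub>j\<close>, so \<open>\<langle>G, Ric\<rangle>\<close> is a quadratic
  expression in the four sums \<open>\<Sum>\<^sub>j x\<^sub>j x\<^sub>j\<^sup>*\<close>, \<open>\<Sum>\<^sub>j x\<^sub>j y\<^sub>j\<^sup>*\<close>, \<open>\<Sum>\<^sub>j y\<^sub>j x\<^sub>j\<^sup>*\<close>, \<open>\<Sum>\<^sub>j y\<^sub>j y\<^sub>j\<^sup>*\<close>.
  Up to the factors \<open>sqrt q\<close> and \<open>1 / sqrt q\<close> these are inner products of the columns \<open>-1\<close>
  and \<open>1\<close> of the unitary corepresentation matrix \<open>t\<^sup>1\<close>, so they equal \<open>q\<close>, \<open>0\<close>, \<open>0\<close>, \<open>1 / q\<close>,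
  and what remains is \<open>[2]\<^sub>q / (q\<^sup>2 + q\<^sup>-\<^sup>2) * (q\<^sup>6 + q\<^sup>-\<^sup>6)\<close>.\<close>

lemma qnum_2_eq:
  assumes "0 < q"
  shows "qnum 2 q = q + inverse q"
proof (cases "q = 1")
  case False
  with assms have "inverse q - q \<noteq> 0"
    by (auto simp: field_simps power2_eq_1_iff simp flip: power2_eq_square)
  moreover have "inverse q ^ 2 - q ^ 2 = (inverse q - q) * (q + inverse q)"
    by (simp add: algebra_simps power2_eq_square)
  ultimately show ?thesis
    using assms False by (simp add: qnum_def powr_minus powr_realpow power_inverse)
qed (simp add: qnum_def)

lemma inverse_power6_add_power6:
  fixes q :: real
  assumes "q \<noteq> 0"
  shows "inverse q ^ 6 + q ^ 6 = (q^2 + inverse q ^ 2) * (1 + (inverse q ^ 2 - q ^ 2)^2)"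
  using assms by (simp add: field_simps) (simp add: algebra_simps eval_nat_numeral)

lemma scalar_curvature_tendsto_2:
  "((\<lambda>p. qnum 2 p / (p^2 + inverse p ^ 2) * (inverse p ^ 6 + p ^ 6)) \<longlongrightarrow> 2) (at_left (1::real))"
proof -
  let ?f = "\<lambda>p::real. (p + inverse p) / (p^2 + inverse p ^ 2) * (inverse p ^ 6 + p ^ 6)"
  have agree: "\<forall>\<^sub>F p in at_left 1. ?f p = qnum 2 p / (p^2 + inverse p ^ 2) * (inverse p ^ 6 + p ^ 6)"
    using eventually_at_left_real[of 0 "1::real"] by (rule eventually_mono) (auto simp: qnum_2_eq)
  have "(?f \<longlongrightarrow> ?f 1) (at_left 1)"
    by (intro tendsto_intros) auto
  then show ?thesis
    using tendsto_cong[OF agree] by simp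
qed

definition offdiag :: "'a::real_algebra_1 \<Rightarrow> 'a \<Rightarrow> 'a mat2" where
  "offdiag x y = (\<lambda>r c. if r = 0 \<and> c = 1 then x else if r = 1 \<and> c = 0 then y else 0)"

lemma lmult_offdiag: "lmult z (offdiag x y) = offdiag (z * x) (z * y)"
  by (intro ext) (auto simp: lmult_def offdiag_def)

lemma mmul_mdiag_offdiag: "mmul (mdiag d e) (offdiag x y) = offdiag (d *\<^sub>R x) (e *\<^sub>R y)"
  by (intro ext) (auto simp: mmul_def mdiag_def offdiag_def numeral_2_eq_2 lessThan_Suc scaleR_conv_of_real)

lemma omega_eq_offdiag:
  "omega st q a b j = offdiag
     (((-1)^(j+1) * sqrt q) *\<^sub>R st (t1 st q a b (2 - int j) (-1)))
     (((-1)^(j+1) * inverse (sqrt q)) *\<^sub>R st (t1 st q a b (2 - int j) 1))"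
  by (intro ext) (auto simp: omega_def offdiag_def)

lemma mult_eq_imp_mult_assoc_eq:
  fixes x y z w :: "'a::semigroup_mult"
  shows "x * y = z \<Longrightarrow> x * (y * w) = z * w"
  by (simp flip: mult.assoc)

locale star_algebra =
  fixes st :: "'a::real_algebra_1 \<Rightarrow> 'a"
  assumes is_star: "is_star st"
begin

lemma star_add [simp]: "st (x + y) = st x + st y"
  and star_mult [simp]: "st (x * y) = st y * st x"
  and star_star [simp]: "st (st x) = x"
  and star_scaleR [simp]: "st (r *\<^sub>R x) = r *\<^sub>R st x"
  using is_star unfolding is_star_def by auto

lemma star_zero [simp]: "st 0 = 0"
  using star_scaleR[of 0] by simp

lemma star_one [simp]: "st 1 = 1"
  using star_mult[of "st 1" 1] by simp

lemma star_of_real [simp]: "st (of_real r) = of_real r"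
  by (simp add: of_real_def)

lemma star_minus [simp]: "st (- x) = - st x"
  using star_scaleR[of "-1" x] by simp

lemma star_diff [simp]: "st (x - y) = st x - st y"
  using star_add[of x "- y"] by simp

lemma madj_offdiag: "madj st (offdiag x y) = offdiag (st y) (st x)"
  by (intro ext) (auto simp: madj_def offdiag_def)

lemma ip_offdiag: "ip st q (offdiag x y) (offdiag u v) = q *\<^sub>R (st y * v) + inverse q *\<^sub>R (st x * u)"
  by (simp add: ip_def mtr_def mmul_def madj_def mdiag_def offdiag_def numeral_2_eq_2 lessThan_Suc
      scaleR_conv_of_real)

lemma ip2_offdiag_frame:
  assumes "distinct js"
  shows "ip2 st q (map (\<lambda>j. (offdiag (x j) (y j), madj st (offdiag (x j) (y j)))) js)
      (map (\<lambda>j. (offdiag (x j) (y j),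
         lmult (of_real c) (mmul (mdiag e f) (madj st (offdiag (x j) (y j)))))) js)
    = (c * q * f) *\<^sub>R (q *\<^sub>R ((\<Sum>j\<in>set js. x j * st (y j)) * (\<Sum>j\<in>set js. y j * st (x j)))
          + inverse q *\<^sub>R ((\<Sum>j\<in>set js. x j * st (x j)) * (\<Sum>j\<in>set js. x j * st (x j))))
    + (c * inverse q * e) *\<^sub>R (q *\<^sub>R ((\<Sum>j\<in>set js. y j * st (y j)) * (\<Sum>j\<in>set js. y j * st (y j)))
          + inverse q *\<^sub>R ((\<Sum>j\<in>set js. y j * st (x j)) * (\<Sum>j\<in>set js. x j * st (y j))))"
    (is "?lhs = ?rhs")
proof -
  have "?lhs = (\<Sum>j\<in>set js. \<Sum>i\<in>set js.
        (c * q * f) *\<^sub>R (x j * (q *\<^sub>R (st (y j) * y i) + inverse q *\<^sub>R (st (x j) * x i)) * st (x i))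
      + (c * inverse q * e) *\<^sub>R (y j * (q *\<^sub>R (st (y j) * y i) + inverse q *\<^sub>R (st (x j) * x i)) * st (y i)))"
    using assms
    by (simp add: ip2_def o_def sum_list_distinct_conv_sum_set madj_offdiag lmult_offdiag
        mmul_mdiag_offdiag ip_offdiag mult.assoc algebra_simps flip: scaleR_conv_of_real)
  also have "\<dots> = ?rhs"
    by (simp add: sum_product sum.distrib scaleR_sum_right scaleR_add_right distrib_left distrib_right mult.assoc)
  finally show ?thesis .
qed

end

locale suq2 = star_algebra st for st :: "'a::real_algebra_1 \<Rightarrow> 'a" +
  fixes q :: real and a b :: 'a
  assumes q_pos: "0 < q" and relations: "suq2_rel st q a b"
begin

abbreviation t :: "int \<Rightarrow> int \<Rightarrow> 'a" where "t \<equiv> t1 st q a b"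

lemma a_mult_b: "a * b = inverse q *\<^sub>R (b * a)"
  and a_mult_star_b: "a * st b = inverse q *\<^sub>R (st b * a)"
  and star_b_mult_b: "st b * b = b * st b"
  and a_mult_star_a: "a * st a = 1 - b * st b"
  and star_a_mult_a: "st a * a = 1 - q\<^sup>2 *\<^sub>R (b * st b)"
  using relations q_pos by (auto simp: suq2_rel_def algebra_simps)

lemma star_a_mult_b: "st a * b = q *\<^sub>R (b * st a)"
  and star_a_mult_star_b: "st a * st b = q *\<^sub>R (st b * st a)"
  using arg_cong[where f = st, OF a_mult_star_b] arg_cong[where f = st, OF a_mult_b] q_pos
  by (auto simp: field_simps)

text \<open>Oriented this way, the relations rewrite every polynomial in \<open>a, b, a\<^sup>*, b\<^sup>*\<close> to a
  combination of ordered monomials \<open>b\<^sup>k b\<^sup>*\<^sup>l a\<^sup>m\<close> and \<open>b\<^sup>k b\<^sup>*\<^sup>l a\<^sup>*\<^sup>m\<close>; the second copy of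
  each rule lets the simplifier apply it inside right-associated products.\<close>

lemmas normal_order =
  a_mult_b a_mult_star_b star_b_mult_b a_mult_star_a star_a_mult_a star_a_mult_b star_a_mult_star_b
  a_mult_b[THEN mult_eq_imp_mult_assoc_eq] a_mult_star_b[THEN mult_eq_imp_mult_assoc_eq]
  star_b_mult_b[THEN mult_eq_imp_mult_assoc_eq] a_mult_star_a[THEN mult_eq_imp_mult_assoc_eq]
  star_a_mult_a[THEN mult_eq_imp_mult_assoc_eq] star_a_mult_b[THEN mult_eq_imp_mult_assoc_eq]
  star_a_mult_star_b[THEN mult_eq_imp_mult_assoc_eq]

lemma t1_columns_orthonormal:
  assumes "m \<in> {-1, 1}" and "n \<in> {-1, 1}"
  shows "(\<Sum>k\<in>{-1, 0, 1}. st (t k m) * t k n) = (if m = n then 1 else 0)"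
  using assms q_pos
  by (auto simp: t1_def normal_order algebra_simps power2_eq_square)

lemma scalar_curv_eq:
  "scalar_curv st q a b = of_real (qnum 2 q / (q^2 + inverse q ^ 2) * (inverse q ^ 6 + q ^ 6))"
proof -
  define x where "x j = ((-1)^(j+1) * sqrt q) *\<^sub>R st (t (2 - int j) (-1))" for j :: nat
  define y where "y j = ((-1)^(j+1) * inverse (sqrt q)) *\<^sub>R st (t (2 - int j) 1)" for j :: nat
  define c where "c = qnum 2 q / (q^2 + inverse q ^ 2)"
  have omega: "omega st q a b j = offdiag (x j) (y j)" for j
    unfolding x_def y_def by (rule omega_eq_offdiag)
  have columns: "(\<Sum>j\<in>{1,2,3}. st (t (2 - int j) m) * t (2 - int j) n) = (if m = n then 1 else 0)"
    if "m \<in> {-1, 1}" "n \<in> {-1, 1}" for m n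
    using t1_columns_orthonormal[OF that] by (simp add: add_ac)
  have "(\<Sum>j\<in>{1,2,3}. x j * st (x j)) = q *\<^sub>R 1"
    using columns[of "-1" "-1"] q_pos by (simp add: x_def mult_ac flip: scaleR_sum_right)
  moreover have "(\<Sum>j\<in>{1,2,3}. y j * st (y j)) = inverse q *\<^sub>R 1"
    using columns[of 1 1] q_pos by (simp add: y_def mult_ac flip: scaleR_sum_right inverse_mult_distrib)
  moreover have "(\<Sum>j\<in>{1,2,3}. x j * st (y j)) = 0"
    using columns[of "-1" 1] q_pos by (simp add: x_def y_def mult_ac flip: scaleR_sum_right)
  moreover have "(\<Sum>j\<in>{1,2,3}. y j * st (x j)) = 0"
    using columns[of 1 "-1"] q_pos by (simp add: x_def y_def mult_ac flip: scaleR_sum_right)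
  ultimately show ?thesis
    unfolding scalar_curv_def line_elt_def ricci_def omega c_def[symmetric]
    using q_pos
    by (subst ip2_offdiag_frame)
       (simp_all add: scaleR_conv_of_real field_simps eval_nat_numeral flip: of_real_mult of_real_add)
qed

end

theorem mainTheorem8:
  fixes q :: real and st :: "'a::real_algebra_1 \<Rightarrow> 'a" and a b :: 'a
  assumes "0 < q" and "q \<le> 1"
    and "is_star st"
    and "suq2_rel st q a b"
  shows "scalar_curv st q a b
           = of_real (qnum 2 q / (q^2 + inverse q ^ 2) * (inverse q ^ 6 + q ^ 6))
       \<and> qnum 2 q / (q^2 + inverse q ^ 2) * (inverse q ^ 6 + q ^ 6)
           = qnum 2 q * (1 + (inverse q ^ 2 - q ^ 2)^2)
       \<and> ((\<lambda>p. qnum 2 p / (p^2 + inverse p ^ 2) * (inverse p ^ 6 + p ^ 6)) \<longlongrightarrow> 2) (at_left 1)"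
proof -
  interpret suq2 st q a b
    using assms by unfold_locales
  show ?thesis
    using assms(1) scalar_curv_eq inverse_power6_add_power6[of q] scalar_curvature_tendsto_2 by simp
qed

end
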